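(* Let $G$ be a connected graph, $c\in V(G)$, and run the scan procedure at $c$ (with any processing order). Let $e$ and $f$ be distinct edges incident to $c$. Then $(e,f)\in(\overline{\alpha}_c\cup\beta_c)^*$ if and only if $(e,f)\in\mathfrak d_c^*$.
   Context: All graphs are finite, simple, undirected; $N(x)$ is the open neighborhood of $x$. For distinct edges $e=vu$, $f=vw$ sharing the vertex $v$, a square spanned by $e$ and $f$ is a 4-cycle $vuxw$ with $x\ne v$ adjacent to both $u$ and $w$; $x$ is its top vertex. The square is chordless if it is an induced 4-cycle ($uw\notin E$, $vx\notin E$); its opposite edge pairs are $\{vu,wx\}$ and $\{vw,ux\}$. The edges $e,f$ span a unique square if $|N(u)\cap N(w)|=2$. A top vertex $x$ is unique if $|N(x)\cap N(v)|=2$. The relation $\delta_G$ on $E(G)$: $(e,f)\in\delta_G$ iff (i) $e,f$ are distinct adjacent edges and it is not the case that they span a unique square and that square is chordless; or (ii) $e,f$ are opposite edges of a chordless square; or (iii) $e=f$. For $v\in V(G)$, $E_v$ is the set of edges incident to $v$, and $\mathfrak d_v=((E_v\times E)\cup(E\times E_v))\cap\delta_G$; $\mathfrak d_v^*$ is its transitive closure (on $E(G)$). Scan procedure at $c$: the vertices of $N(c)$ are called primal, and edges incident to $c$ primal edges. Maintain two sets $I$ (incidence list) and $A$ (absence list) of unordered pairs of primal edges, both initially empty, and for every non-primal vertex $w\ne c$ a record of at most two "recorded primal neighbors" (first and second), initially none. Process the neighbors $u$ of $c$ one by one in an arbitrary order, and for each such $u$ process its neighbors $w\neq c$ in an arbitrary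 order: (1) if $w\in N(c)$, add $\{cu,cw\}$ to $A$; (2) else, if $w$ has no recorded primal neighbor, record $u$ as its first primal neighbor; (3) else, if $w$ has exactly one recorded primal neighbor $v$, record $u$ as its second primal neighbor, and if $\{cu,cv\}\notin I$ add $\{cu,cv\}$ to $I$, otherwise add $\{cu,cv\}$ to $A$; (4) else ($w$ has recorded first and second primal neighbors $v_1,v_2$) add $\{cv_1,cv_2\},\{cv_1,cu\},\{cv_2,cu\}$ to $A$ (the record is not changed). After the procedure, $\beta_c$ is the symmetric relation on primal edges consisting of the pairs in $A$, and $\overline{\alpha}_c$ the symmetric relation consisting of all pairs of primal edges not in $I$. $(\overline{\alpha}_c\cup\beta_c)^*$ denotes the transitive closure of their union (a relation on primal edges). *)

theory Defs
  imports Main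
begin

definition simple_graph :: "'a set \<Rightarrow> 'a set set \<Rightarrow> bool" where
  "simple_graph V E \<longleftrightarrow> finite V \<and>
     (\<forall>e\<in>E. \<exists>u v. e = {u, v} \<and> u \<noteq> v \<and> u \<in> V \<and> v \<in> V)"

definition connected_graph :: "'a set \<Rightarrow> 'a set set \<Rightarrow> bool" where
  "connected_graph V E \<longleftrightarrow> V \<noteq> {} \<and>
     (\<forall>u\<in>V. \<forall>v\<in>V. (u, v) \<in> {(x, y). {x, y} \<in> E}\<^sup>*)"

definition nbhd :: "'a set set \<Rightarrow> 'a \<Rightarrow> 'a set" where
  "nbhd E x = {y. {x, y} \<in> E}"

definition inc_edges :: "'a set set \<Rightarrow> 'a \<Rightarrow> 'a set set" where
  "inc_edges E v = {e \<in> E. v \<in> e}"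

definition chordless_square :: "'a set set \<Rightarrow> 'a \<Rightarrow> 'a \<Rightarrow> 'a \<Rightarrow> 'a \<Rightarrow> bool" where
  "chordless_square E a b c d \<longleftrightarrow> distinct [a, b, c, d] \<and>
     {a, b} \<in> E \<and> {b, c} \<in> E \<and> {c, d} \<in> E \<and> {d, a} \<in> E \<and>
     {a, c} \<notin> E \<and> {b, d} \<notin> E"

text \<open>The edges vu and vw (u \<noteq> w) span a unique square (|N(u) \<inter> N(w)| = 2) and
 that square (with top vertex x \<noteq> v) is chordless.\<close>
definition unique_chordless_square :: "'a set set \<Rightarrow> 'a \<Rightarrow> 'a \<Rightarrow> 'a \<Rightarrow> bool" where
  "unique_chordless_square E v u w \<longleftrightarrow>
     card (nbhd E u \<inter> nbhd E w) = 2 \<and>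
     (\<exists>x. x \<noteq> v \<and> x \<in> nbhd E u \<inter> nbhd E w \<and> {u, w} \<notin> E \<and> {v, x} \<notin> E)"

definition delta :: "'a set set \<Rightarrow> ('a set \<times> 'a set) set" where
  "delta E = {(e, f). e \<in> E \<and> f \<in> E \<and>
     ((\<exists>v u w. e = {v, u} \<and> f = {v, w} \<and> u \<noteq> w \<and> \<not> unique_chordless_square E v u w)
      \<or> (\<exists>a b c d. chordless_square E a b c d \<and> e = {a, b} \<and> f = {c, d})
      \<or> e = f)}"

definition dv :: "'a set set \<Rightarrow> 'a \<Rightarrow> ('a set \<times> 'a set) set" where
  "dv E v = ((inc_edges E v \<times> E) \<union> (E \<times> inc_edges E v)) \<inter> delta E"

text \<open>State: incidence list I, absence list A (sets of
 unordered pairs of primal edges, an unordered pair being a set of edges) and the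
 record of recorded primal neighbours of each vertex (a list of length \<le> 2).\<close>
type_synonym 'a scan_state = "'a set set set \<times> 'a set set set \<times> ('a \<Rightarrow> 'a list)"

definition scan_step :: "'a set set \<Rightarrow> 'a \<Rightarrow> 'a \<Rightarrow> 'a \<Rightarrow> 'a scan_state \<Rightarrow> 'a scan_state" where
  "scan_step E c u w st = (case st of (I, A, r) \<Rightarrow>
     (if w \<in> nbhd E c then (I, insert {{c, u}, {c, w}} A, r)
      else (case r w of
              [] \<Rightarrow> (I, A, r(w := [u]))
            | [v] \<Rightarrow> (if {{c, u}, {c, v}} \<notin> I
                      then (insert {{c, u}, {c, v}} I, A, r(w := [v, u]))
                      else (I, insert {{c, u}, {c, v}} A, r(w := [v, u])))
            | v1 # v2 # _ \<Rightarrow>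
                (I, A \<union> {{{c, v1}, {c, v2}}, {{c, v1}, {c, u}}, {{c, v2}, {c, u}}}, r))))"

text \<open>Run the scan at c: ord is the processing order of N(c), nb u the
 processing order of the neighbours w \<noteq> c of u.\<close>
definition scan_run :: "'a set set \<Rightarrow> 'a \<Rightarrow> 'a list \<Rightarrow> ('a \<Rightarrow> 'a list) \<Rightarrow> 'a scan_state" where
  "scan_run E c ord nb =
     fold (\<lambda>u st. fold (\<lambda>w st'. scan_step E c u w st') (nb u) st) ord ({}, {}, (\<lambda>_. []))"

definition valid_scan_order :: "'a set set \<Rightarrow> 'a \<Rightarrow> 'a list \<Rightarrow> ('a \<Rightarrow> 'a list) \<Rightarrow> bool" where
  "valid_scan_order E c ord nb \<longleftrightarrow> distinct ord \<and> set ord = nbhd E c \<and>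
     (\<forall>u\<in>nbhd E c. distinct (nb u) \<and> set (nb u) = nbhd E u - {c})"

definition scan_I :: "'a set set \<Rightarrow> 'a \<Rightarrow> 'a list \<Rightarrow> ('a \<Rightarrow> 'a list) \<Rightarrow> 'a set set set" where
  "scan_I E c ord nb = fst (scan_run E c ord nb)"

definition scan_A :: "'a set set \<Rightarrow> 'a \<Rightarrow> 'a list \<Rightarrow> ('a \<Rightarrow> 'a list) \<Rightarrow> 'a set set set" where
  "scan_A E c ord nb = fst (snd (scan_run E c ord nb))"

definition beta_c :: "'a set set \<Rightarrow> 'a \<Rightarrow> 'a list \<Rightarrow> ('a \<Rightarrow> 'a list) \<Rightarrow> ('a set \<times> 'a set) set" where
  "beta_c E c ord nb = {(e, f). e \<in> inc_edges E c \<and> f \<in> inc_edges E c \<and> {e, f} \<in> scan_A E c ord nb}"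

definition alpha_bar_c :: "'a set set \<Rightarrow> 'a \<Rightarrow> 'a list \<Rightarrow> ('a \<Rightarrow> 'a list) \<Rightarrow> ('a set \<times> 'a set) set" where
  "alpha_bar_c E c ord nb = {(e, f). e \<in> inc_edges E c \<and> f \<in> inc_edges E c \<and> {e, f} \<notin> scan_I E c ord nb}"

end

theory Submission
  imports Defs
begin

text \<open>Two distinct primal edges cu, cw are delta-related unless they span a unique chordless
  square; its top x is then a non-neighbour of c and the only common neighbour of u and w
  besides c. If |N(c) \<inter> N(x)| \<noteq> 2, the path cu, ux, wc lies in d_c; otherwise u and w are
  the only primal neighbours of x, so the scan puts {cu, cw} into I. Together with a
  description of the pairs that can enter A this gives alpha-bar \<union> beta \<subseteq> d_c*.
  Conversely, a d_c-step between primal edges, or two d_c-steps through an edge missing c,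
  is recovered in alpha-bar \<union> beta: either the pair is absent from I, or the scan has seen a
  further common neighbour, which puts the pair, or a chain of pairs through a shared first
  visitor, into A.\<close>

section \<open>Running the scan on a list of visits\<close>

abbreviation primal_pair :: "'a \<Rightarrow> 'a \<Rightarrow> 'a \<Rightarrow> 'a set set" where
  "primal_pair c u w \<equiv> {{c, u}, {c, w}}"

lemma primal_pair_commute: "primal_pair c u w = primal_pair c w u"
  by (simp add: insert_commute)

lemma primal_pair_eq_iff:
  assumes "a \<noteq> c" "b \<noteq> c" "u \<noteq> c" "w \<noteq> c"
  shows "primal_pair c a b = primal_pair c u w \<longleftrightarrow> {a, b} = {u, w}"
  using assms by (auto simp: doubleton_eq_iff)

definition scan_list :: "'a set set \<Rightarrow> 'a \<Rightarrow> ('a \<times> 'a) list \<Rightarrow> 'a scan_state" where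
  "scan_list E c xs = fold (\<lambda>(u, w). scan_step E c u w) xs ({}, {}, \<lambda>_. [])"

abbreviation "list_I E c xs \<equiv> fst (scan_list E c xs)"
abbreviation "list_A E c xs \<equiv> fst (snd (scan_list E c xs))"
abbreviation "list_record E c xs \<equiv> snd (snd (scan_list E c xs))"

definition visitors :: "('a \<times> 'a) list \<Rightarrow> 'a \<Rightarrow> 'a list" where
  "visitors xs w = map fst (filter (\<lambda>(u, w'). w' = w) xs)"

lemma scan_list_snoc: "scan_list E c (xs @ [(u, w)]) = scan_step E c u w (scan_list E c xs)"
  by (simp add: scan_list_def)

lemma visitors_snoc:
  "visitors (xs @ [(u, w')]) w = (if w' = w then visitors xs w @ [u] else visitors xs w)"
  by (simp add: visitors_def)

lemma set_visitors: "set (visitors xs w) = {u. (u, w) \<in> set xs}"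
  by (force simp: visitors_def)

lemma distinct_visitors: "distinct xs \<Longrightarrow> distinct (visitors xs w)"
  by (induction xs) (auto simp: visitors_def set_visitors[unfolded visitors_def])

lemma visitors_cases:
  obtains "visitors xs w = []" | v where "visitors xs w = [v]"
  | v1 v2 vs where "visitors xs w = v1 # v2 # vs"
  by (metis remdups_adj.cases)

lemma list_record_eq:
  "list_record E c xs w = (if w \<in> nbhd E c then [] else take 2 (visitors xs w))"
proof (induction xs arbitrary: w rule: rev_induct)
  case Nil
  then show ?case by (simp add: scan_list_def visitors_def)
next
  case (snoc x xs)
  obtain u w' where x: "x = (u, w')" by fastforce
  obtain I A r where st: "scan_list E c xs = (I, A, r)" by (metis prod.exhaust)
  have r: "r = (\<lambda>w. if w \<in> nbhd E c then [] else take 2 (visitors xs w))"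
    using snoc.IH st by fastforce
  show ?case
    by (cases xs w' rule: visitors_cases)
      (auto simp: x st r scan_list_snoc scan_step_def visitors_snoc)
qed

lemma scan_list_snoc_step:
  "scan_list E c (xs @ [(u, w)]) =
     scan_step E c u w (list_I E c xs, list_A E c xs, list_record E c xs)"
  by (simp add: scan_list_snoc)

lemma scan_list_snoc_primal:
  assumes "w \<in> nbhd E c"
  shows "list_I E c (xs @ [(u, w)]) = list_I E c xs"
    and "list_A E c (xs @ [(u, w)]) = insert (primal_pair c u w) (list_A E c xs)"
  unfolding scan_list_snoc_step scan_step_def prod.case
  using assms by simp_all

lemma scan_list_snoc_first:
  assumes "w \<notin> nbhd E c" "visitors xs w = []"
  shows "list_I E c (xs @ [(u, w)]) = list_I E c xs"
    and "list_A E c (xs @ [(u, w)]) = list_A E c xs"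
  unfolding scan_list_snoc_step scan_step_def prod.case
  using assms by (simp_all add: list_record_eq)

lemma scan_list_snoc_second:
  assumes "w \<notin> nbhd E c" "visitors xs w = [v]"
  shows "list_I E c (xs @ [(u, w)]) = insert (primal_pair c u v) (list_I E c xs)"
    and "list_A E c (xs @ [(u, w)]) =
      (if primal_pair c u v \<in> list_I E c xs then insert (primal_pair c u v) (list_A E c xs)
       else list_A E c xs)"
  unfolding scan_list_snoc_step scan_step_def prod.case
  using assms by (auto simp: list_record_eq)

lemma scan_list_snoc_later:
  assumes "w \<notin> nbhd E c" "visitors xs w = v1 # v2 # vs"
  shows "list_I E c (xs @ [(u, w)]) = list_I E c xs"
    and "list_A E c (xs @ [(u, w)]) =
      list_A E c xs \<union> {primal_pair c v1 v2, primal_pair c v1 u, primal_pair c v2 u}"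
  unfolding scan_list_snoc_step scan_step_def prod.case
  using assms by (simp_all add: list_record_eq)

lemma scan_list_snoc_mono:
  "list_I E c xs \<subseteq> list_I E c (xs @ [(u, w)]) \<and> list_A E c xs \<subseteq> list_A E c (xs @ [(u, w)])"
proof (cases "w \<in> nbhd E c")
  case True
  then show ?thesis by (auto simp: scan_list_snoc_primal)
next
  case False
  then show ?thesis
    by (cases xs w rule: visitors_cases)
      (auto simp: scan_list_snoc_first scan_list_snoc_second scan_list_snoc_later)
qed

lemma take2_visitors_snoc:
  "take 2 (visitors (xs @ [(u, w')]) w) = [a, b] \<longleftrightarrow>
     take 2 (visitors xs w) = [a, b] \<or> (w' = w \<and> visitors xs w = [a] \<and> b = u)"
  by (cases xs w rule: visitors_cases) (auto simp: visitors_snoc)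

lemma list_I_iff:
  "P \<in> list_I E c xs \<longleftrightarrow>
     (\<exists>w a b. w \<notin> nbhd E c \<and> take 2 (visitors xs w) = [a, b] \<and> P = primal_pair c a b)"
proof (induction xs arbitrary: P rule: rev_induct)
  case Nil
  then show ?case by (simp add: scan_list_def visitors_def)
next
  case (snoc x xs)
  obtain u w' where x: "x = (u, w')" by fastforce
  show ?case
  proof (cases "w' \<in> nbhd E c")
    case True
    then show ?thesis
      using snoc.IH by (auto simp: x scan_list_snoc_primal take2_visitors_snoc)
  next
    case False
    then show ?thesis
      using snoc.IH
      by (cases xs w' rule: visitors_cases)
        (auto simp: x scan_list_snoc_first scan_list_snoc_second scan_list_snoc_later
          take2_visitors_snoc primal_pair_commute)
  qed
qed

lemma list_A_if_primal_visit:
  assumes "(u, w) \<in> set xs" "w \<in> nbhd E c"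
  shows "primal_pair c u w \<in> list_A E c xs"
  using assms(1)
proof (induction xs rule: rev_induct)
  case (snoc x xs)
  then show ?case
    using scan_list_snoc_mono[of E c xs "fst x" "snd x"] scan_list_snoc_primal(2)[OF assms(2)]
    by (cases "x = (u, w)") auto
qed simp

lemma list_A_if_three_visitors:
  assumes "w \<notin> nbhd E c" "visitors xs w = a # vs" "2 \<le> length vs" "t \<in> set vs"
  shows "primal_pair c a t \<in> list_A E c xs"
  using assms(2-4)
proof (induction xs arbitrary: vs rule: rev_induct)
  case Nil
  then show ?case by (simp add: visitors_def)
next
  case (snoc x xs)
  obtain u w' where x: "x = (u, w')" by fastforce
  note mono = scan_list_snoc_mono[of E c xs u w']
  show ?case
  proof (cases "w' = w")
    case False
    then show ?thesis
      using snoc mono by (auto simp: x visitors_snoc)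
  next
    case True
    with snoc.prems obtain b l where vis: "visitors xs w = a # b # l" and vs: "vs = b # l @ [u]"
      by (cases xs w rule: visitors_cases) (auto simp: x visitors_snoc)
    have new: "primal_pair c a b \<in> list_A E c (xs @ [x])" "primal_pair c a u \<in> list_A E c (xs @ [x])"
      using scan_list_snoc_later(2)[OF assms(1) vis] True by (simp_all add: x)
    consider "t = b" | "t = u" | "t \<in> set l" using snoc.prems(3) vs by auto
    then show ?thesis
    proof cases
      case 3
      then have "2 \<le> length (b # l)" by (cases l) auto
      then show ?thesis using 3 snoc.IH[OF vis] mono by (auto simp: x)
    qed (use new in auto)
  qed
qed

text \<open>Whichever of w, w' receives its second visitor later finds the pair already in I.\<close>
lemma list_A_if_shared_first_two:
  assumes "w \<noteq> w'" "w \<notin> nbhd E c" "w' \<notin> nbhd E c"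
    and "take 2 (visitors xs w) = [a, b]" "take 2 (visitors xs w') = [a', b']"
    and "{a, b} = {a', b'}"
  shows "primal_pair c a b \<in> list_A E c xs"
  using assms
proof (induction xs arbitrary: w w' a b a' b' rule: rev_induct)
  case Nil
  then show ?case by (simp add: visitors_def)
next
  case (snoc x xs)
  obtain u w0 where x: "x = (u, w0)" by fastforce
  have same: "primal_pair c a b = primal_pair c a' b'"
    using snoc.prems(6) by (auto simp: doubleton_eq_iff insert_commute)
  have completed:
    "primal_pair c p u \<in> list_A E c (xs @ [x])"
    if "w0 = v" "v \<noteq> v'" "v \<notin> nbhd E c" "visitors xs v = [p]"
      "take 2 (visitors xs v') = [p', q']" "primal_pair c p u = primal_pair c p' q'" "v' \<notin> nbhd E c"
    for v v' p p' q'
  proof -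
    have "primal_pair c u p \<in> list_I E c xs"
      using that list_I_iff[of _ E c xs] by (metis primal_pair_commute)
    then show ?thesis
      using scan_list_snoc_second(2)[OF that(3,4)] that(1) by (simp add: x primal_pair_commute)
  qed
  consider "take 2 (visitors xs w) = [a, b]" "take 2 (visitors xs w') = [a', b']"
    | "w0 = w" "visitors xs w = [a]" "b = u" "take 2 (visitors xs w') = [a', b']"
    | "w0 = w'" "visitors xs w' = [a']" "b' = u" "take 2 (visitors xs w) = [a, b]"
    using snoc.prems(1,4,5) by (auto simp: x take2_visitors_snoc)
  then show ?case
  proof cases
    case 1
    then show ?thesis
      using snoc.IH[OF snoc.prems(1-3) _ _ snoc.prems(6)] scan_list_snoc_mono[of E c xs u w0]
      by (auto simp: x)
  next
    case 2
    then show ?thesis using completed[of w w' a a' b'] snoc.prems same by simp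
  next
    case 3
    then show ?thesis using completed[of w' w a' a b] snoc.prems same by simp
  qed
qed

definition scan_pairs :: "'a list \<Rightarrow> ('a \<Rightarrow> 'a list) \<Rightarrow> ('a \<times> 'a) list" where
  "scan_pairs ord nb = concat (map (\<lambda>u. map (Pair u) (nb u)) ord)"

lemma scan_run_eq_scan_list: "scan_run E c ord nb = scan_list E c (scan_pairs ord nb)"
proof -
  have "fold (\<lambda>(u, w). scan_step E c u w) (scan_pairs ord nb) st =
      fold (\<lambda>u st. fold (\<lambda>w st'. scan_step E c u w st') (nb u) st) ord st" for st
    by (induction ord arbitrary: st) (simp_all add: scan_pairs_def fold_map comp_def)
  then show ?thesis by (simp add: scan_run_def scan_list_def)
qed

lemma set_scan_pairs: "(u, w) \<in> set (scan_pairs ord nb) \<longleftrightarrow> u \<in> set ord \<and> w \<in> set (nb u)"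
  by (auto simp: scan_pairs_def)

lemma distinct_scan_pairs:
  assumes "distinct ord" "\<And>u. u \<in> set ord \<Longrightarrow> distinct (nb u)"
  shows "distinct (scan_pairs ord nb)"
  using assms by (induction ord) (auto simp: scan_pairs_def distinct_map inj_on_def)

section \<open>Chordless squares and the relation delta\<close>

lemma unique_chordless_square_commute:
  "unique_chordless_square E v u w \<longleftrightarrow> unique_chordless_square E v w u"
  unfolding unique_chordless_square_def by (auto simp: Int_commute insert_commute)

lemma chordless_square_rotate:
  "chordless_square E a b c d \<Longrightarrow> chordless_square E c d a b"
  unfolding chordless_square_def by (auto simp: insert_commute)

lemma delta_sym: "(g, h) \<in> delta E \<Longrightarrow> (h, g) \<in> delta E"
  unfolding delta_def
  by (simp only: mem_Collect_eq prod.case) (metis unique_chordless_square_commute chordless_square_rotate)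

lemma nbhd_sym: "x \<in> nbhd E y \<longleftrightarrow> y \<in> nbhd E x"
  by (simp add: nbhd_def insert_commute)

lemma card_neq_2_if_three:
  "a \<in> S \<Longrightarrow> b \<in> S \<Longrightarrow> d \<in> S \<Longrightarrow> a \<noteq> b \<Longrightarrow> a \<noteq> d \<Longrightarrow> b \<noteq> d \<Longrightarrow> card S \<noteq> 2"
  by (auto simp: card_2_iff)

lemma distinct_two_elements:
  assumes "distinct l" "set l = {u, w}" "u \<noteq> w"
  shows "l = [u, w] \<or> l = [w, u]"
proof -
  have "length l = 2" using assms distinct_card[of l] by simp
  then obtain p q where "l = [p, q]" by (auto simp: numeral_2_eq_2 length_Suc_conv)
  then show ?thesis using assms by (auto simp: doubleton_eq_iff)
qed

lemma sym_beta_c: "sym (beta_c E c ord nb)"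
  unfolding sym_def beta_c_def by (auto simp: insert_commute)

lemma unique_chordless_square_topE:
  assumes "unique_chordless_square E c u w"
  obtains x where "x \<notin> nbhd E c" "x \<noteq> c" "u \<in> nbhd E x" "w \<in> nbhd E x" "{u, w} \<notin> E"
    "card (nbhd E u \<inter> nbhd E w) = 2"
  using assms unfolding unique_chordless_square_def by (auto simp: nbhd_def insert_commute)

section \<open>The scan at a vertex of a simple graph\<close>

text \<open>Every pair {cu, cw} the scan puts into A satisfies this: by step (1) u and w are adjacent;
  by step (3) they have two common neighbours besides c, the current vertex and an earlier one
  with the same first two primal neighbours; by step (4) the current vertex is a common
  neighbour with more than two primal neighbours.\<close>
definition absence_witness :: "'a set set \<Rightarrow> 'a \<Rightarrow> 'a \<Rightarrow> 'a \<Rightarrow> bool" where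
  "absence_witness E c u w \<longleftrightarrow> {u, w} \<in> E \<or> card (nbhd E u \<inter> nbhd E w) \<noteq> 2 \<or>
     (\<exists>x. x \<notin> nbhd E c \<and> x \<noteq> c \<and> u \<in> nbhd E x \<and> w \<in> nbhd E x \<and>
          card (nbhd E c \<inter> nbhd E x) \<noteq> 2)"

lemma absence_witness_commute: "absence_witness E c u w \<longleftrightarrow> absence_witness E c w u"
  unfolding absence_witness_def by (auto simp: insert_commute Int_commute)

locale scan_at =
  fixes V :: "'a set" and E :: "'a set set" and c :: 'a
    and ord :: "'a list" and nb :: "'a \<Rightarrow> 'a list"
  assumes simple: "simple_graph V E"
    and order: "valid_scan_order E c ord nb"
begin

abbreviation "N \<equiv> nbhd E"
abbreviation "steps \<equiv> scan_pairs ord nb"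
abbreviation "alpha \<equiv> alpha_bar_c E c ord nb"
abbreviation "beta \<equiv> beta_c E c ord nb"

lemma not_in_own_nbhd: "x \<notin> N x"
  using simple by (force simp: simple_graph_def nbhd_def doubleton_eq_iff)

lemma nbhd_neq: "y \<in> N x \<Longrightarrow> y \<noteq> x"
  using not_in_own_nbhd by blast

lemma finite_nbhd: "finite (N x)"
proof -
  have "N x \<subseteq> V"
    using simple by (force simp: simple_graph_def nbhd_def doubleton_eq_iff)
  then show ?thesis using simple finite_subset by (auto simp: simple_graph_def)
qed

lemma steps_iff: "(u, w) \<in> set steps \<longleftrightarrow> u \<in> N c \<and> w \<in> N u \<and> w \<noteq> c"
  using order by (auto simp: valid_scan_order_def set_scan_pairs)

lemma distinct_steps: "distinct steps"
  using order by (auto simp: valid_scan_order_def intro: distinct_scan_pairs)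

lemma set_visitors_steps: "w \<noteq> c \<Longrightarrow> set (visitors steps w) = N c \<inter> N w"
  by (auto simp: set_visitors steps_iff nbhd_sym)

lemma inc_edgesE:
  assumes "e \<in> inc_edges E c"
  obtains u where "u \<in> N c" "e = {c, u}"
proof -
  obtain a b where "e = {a, b}" "e \<in> E" "c \<in> e"
    using assms simple by (auto simp: inc_edges_def simple_graph_def)
  then show ?thesis using that by (auto simp: nbhd_def insert_commute)
qed

lemma primal_edge_iff: "{c, u} \<in> inc_edges E c \<longleftrightarrow> u \<in> N c"
  by (simp add: inc_edges_def nbhd_def)

lemma beta_iff:
  "u \<in> N c \<Longrightarrow> w \<in> N c \<Longrightarrow> ({c, u}, {c, w}) \<in> beta \<longleftrightarrow> primal_pair c u w \<in> list_A E c steps"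
  by (simp add: beta_c_def scan_A_def scan_run_eq_scan_list primal_edge_iff)

lemma alpha_iff:
  "u \<in> N c \<Longrightarrow> w \<in> N c \<Longrightarrow> ({c, u}, {c, w}) \<in> alpha \<longleftrightarrow> primal_pair c u w \<notin> list_I E c steps"
  by (simp add: alpha_bar_c_def scan_I_def scan_run_eq_scan_list primal_edge_iff)

lemma beta_if_adjacent: "u \<in> N c \<Longrightarrow> w \<in> N c \<Longrightarrow> w \<in> N u \<Longrightarrow> ({c, u}, {c, w}) \<in> beta"
  by (simp add: beta_iff list_A_if_primal_visit steps_iff nbhd_neq)

lemma first_two_visitorsE:
  assumes "x \<noteq> c" "u \<in> N c \<inter> N x" "w \<in> N c \<inter> N x" "u \<noteq> w" "card (N c \<inter> N x) = 2"
  obtains a b where "take 2 (visitors steps x) = [a, b]" "{a, b} = {u, w}"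
proof -
  obtain p q where "N c \<inter> N x = {p, q}"
    using assms(5) by (auto simp: card_2_iff)
  then have "N c \<inter> N x = {u, w}"
    using assms(2-4) by auto
  then have "visitors steps x = [u, w] \<or> visitors steps x = [w, u]"
    using distinct_two_elements distinct_visitors[OF distinct_steps] set_visitors_steps assms
    by metis
  then show ?thesis using that by (auto simp: insert_commute)
qed

lemma beta_chain_if_many_common:
  assumes "x \<notin> N c" "x \<noteq> c" "u \<in> N c \<inter> N x" "w \<in> N c \<inter> N x" "u \<noteq> w"
    and "card (N c \<inter> N x) \<noteq> 2"
  shows "({c, u}, {c, w}) \<in> beta\<^sup>*"
proof -
  have "card {u, w} \<le> card (N c \<inter> N x)"
    using assms(3,4) finite_nbhd by (intro card_mono) auto
  with assms(5,6) have "3 \<le> card (N c \<inter> N x)" by simp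
  moreover have "length (visitors steps x) = card (N c \<inter> N x)"
    using distinct_card[OF distinct_visitors[OF distinct_steps], of x] set_visitors_steps[OF assms(2)]
    by simp
  ultimately have "3 \<le> length (visitors steps x)" by simp
  then obtain a vs where vis: "visitors steps x = a # vs" "2 \<le> length vs"
    by (cases "visitors steps x") auto
  have a: "a \<in> N c" using set_visitors_steps[OF assms(2)] vis by auto
  have hub: "({c, a}, {c, t}) \<in> beta\<^sup>*" if "t \<in> N c \<inter> N x" for t
  proof (cases "t = a")
    case False
    then have "t \<in> set vs" using that vis set_visitors_steps[OF assms(2)] by auto
    then show ?thesis
      using list_A_if_three_visitors[OF assms(1) vis] beta_iff a that by blast
  qed simp
  have "({c, u}, {c, a}) \<in> beta\<^sup>*"
    by (rule symD[OF sym_rtrancl[OF sym_beta_c] hub[OF assms(3)]])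
  then show ?thesis using hub[OF assms(4)] by (rule rtrancl_trans)
qed

lemma delta_primal_iff:
  assumes "u \<in> N c" "w \<in> N c" "u \<noteq> w"
  shows "({c, u}, {c, w}) \<in> delta E \<longleftrightarrow> \<not> unique_chordless_square E c u w"
proof
  assume "({c, u}, {c, w}) \<in> delta E"
  moreover have "u \<noteq> c" "w \<noteq> c" using assms nbhd_neq by auto
  moreover have "\<not> chordless_square E a b c' d" if "{c, u} = {a, b}" "{c, w} = {c', d}" for a b c' d
    using that by (auto simp: chordless_square_def doubleton_eq_iff)
  ultimately show "\<not> unique_chordless_square E c u w"
    using assms(3) unfolding delta_def by (auto simp: doubleton_eq_iff)
next
  assume "\<not> unique_chordless_square E c u w"
  then show "({c, u}, {c, w}) \<in> delta E"
    using assms unfolding delta_def by (auto simp: nbhd_def)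
qed

lemma dv_primal_iff: "u \<in> N c \<Longrightarrow> w \<in> N c \<Longrightarrow> ({c, u}, {c, w}) \<in> dv E c \<longleftrightarrow> ({c, u}, {c, w}) \<in> delta E"
  by (auto simp: dv_def inc_edges_def nbhd_def)

text \<open>The path cu, ux, wc: cu and ux span no unique square since |N(c) \<inter> N(x)| \<noteq> 2, and
  ux, wc are opposite edges of the chordless square c u x w.\<close>
lemma dv_path_around_square:
  assumes "u \<in> N c" "w \<in> N c" "u \<noteq> w" "x \<notin> N c" "x \<noteq> c" "u \<in> N x" "w \<in> N x"
    and "{u, w} \<notin> E" "card (N c \<inter> N x) \<noteq> 2"
  shows "({c, u}, {c, w}) \<in> (dv E c)\<^sup>*"
proof -
  have square: "chordless_square E u x w c"
    using assms nbhd_neq unfolding chordless_square_def by (auto simp: nbhd_def insert_commute)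
  then have edges: "{u, x} \<in> E" "{w, c} \<in> E" "{c, u} \<in> E"
    by (auto simp: chordless_square_def insert_commute)
  have "\<not> unique_chordless_square E u c x"
    using assms(9) by (simp add: unique_chordless_square_def)
  then have "({c, u}, {u, x}) \<in> dv E c"
    using edges assms(5) unfolding dv_def delta_def inc_edges_def by (auto simp: insert_commute)
  moreover have "({u, x}, {w, c}) \<in> delta E"
    using square edges unfolding delta_def by (blast intro: insert_commute[THEN subst])
  then have "({u, x}, {c, w}) \<in> dv E c"
    using edges unfolding dv_def inc_edges_def by (simp add: insert_commute)
  ultimately show ?thesis by simp
qed

lemma dv_rtrancl_primalI:
  assumes "u \<in> N c" "w \<in> N c"
    and top: "u \<noteq> w \<Longrightarrow> unique_chordless_square E c u w \<Longrightarrow>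
      \<exists>x. x \<notin> N c \<and> x \<noteq> c \<and> u \<in> N x \<and> w \<in> N x \<and> card (N c \<inter> N x) \<noteq> 2"
  shows "({c, u}, {c, w}) \<in> (dv E c)\<^sup>*"
proof (cases "u = w \<or> \<not> unique_chordless_square E c u w")
  case True
  then show ?thesis using delta_primal_iff dv_primal_iff assms(1,2) by blast
next
  case False
  then have "{u, w} \<notin> E" by (auto elim: unique_chordless_square_topE)
  with False top show ?thesis using dv_path_around_square assms(1,2) by blast
qed

lemma alpha_in_dv:
  assumes "(e, f) \<in> alpha"
  shows "(e, f) \<in> (dv E c)\<^sup>*"
proof -
  obtain u w where uw: "u \<in> N c" "w \<in> N c" "e = {c, u}" "f = {c, w}"
    using assms by (auto simp: alpha_bar_c_def elim!: inc_edgesE)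
  have "\<exists>x. x \<notin> N c \<and> x \<noteq> c \<and> u \<in> N x \<and> w \<in> N x \<and> card (N c \<inter> N x) \<noteq> 2"
    if "u \<noteq> w" and ucs: "unique_chordless_square E c u w"
  proof -
    obtain x where x: "x \<notin> N c" "x \<noteq> c" "u \<in> N x" "w \<in> N x" "{u, w} \<notin> E"
      and "card (N u \<inter> N w) = 2"
      using ucs by (rule unique_chordless_square_topE)
    have "card (N c \<inter> N x) \<noteq> 2"
    proof
      assume "card (N c \<inter> N x) = 2"
      then obtain a b where "take 2 (visitors steps x) = [a, b]" "{a, b} = {u, w}"
        using first_two_visitorsE x uw \<open>u \<noteq> w\<close> by (metis IntI nbhd_sym)
      then have "primal_pair c u w \<in> list_I E c steps"
        using x(1) list_I_iff by (fastforce simp: doubleton_eq_iff insert_commute)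
      then show False using assms uw alpha_iff by simp
    qed
    then show ?thesis using x by blast
  qed
  then show ?thesis using dv_rtrancl_primalI uw by simp
qed

lemma primal_pair_eq_iff_nbhd:
  "u \<in> N c \<Longrightarrow> w \<in> N c \<Longrightarrow> a \<in> N c \<Longrightarrow> b \<in> N c \<Longrightarrow>
    primal_pair c u w = primal_pair c a b \<longleftrightarrow> {u, w} = {a, b}"
  by (simp add: primal_pair_eq_iff nbhd_neq)

lemma visitors_in_nbhd:
  "set ys \<subseteq> set steps \<Longrightarrow> v \<in> set (visitors ys w) \<Longrightarrow> v \<in> N c \<and> w \<in> N v \<and> w \<noteq> c"
  by (auto simp: set_visitors steps_iff)

lemma absence_witness_second_visit:
  assumes "set ys \<subseteq> set steps" "w \<notin> N c" "w \<noteq> c" "visitors ys w = [v]"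
    and "u \<in> N c" "w \<in> N u" "primal_pair c u v \<in> list_I E c ys"
  shows "absence_witness E c u v"
proof -
  obtain x a b where x: "x \<notin> N c" "take 2 (visitors ys x) = [a, b]"
    and ab: "primal_pair c u v = primal_pair c a b"
    using assms(7) list_I_iff by meson
  have "set [a, b] \<subseteq> set (visitors ys x)" using x(2) by (metis set_take_subset)
  then have "a \<in> set (visitors ys x)" "b \<in> set (visitors ys x)" "v \<in> set (visitors ys w)"
    using assms(4) by auto
  then have nb: "a \<in> N c" "x \<in> N a" "b \<in> N c" "x \<in> N b" "x \<noteq> c" "v \<in> N c" "w \<in> N v"
    using visitors_in_nbhd[OF assms(1)] by auto
  then have "{u, v} = {a, b}"
    using ab assms(5) primal_pair_eq_iff_nbhd by simp
  then have common: "c \<in> N u \<inter> N v" "x \<in> N u \<inter> N v" "w \<in> N u \<inter> N v"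
    using nb assms(5,6) by (auto simp: nbhd_sym doubleton_eq_iff)
  have "x \<noteq> w" using x(2) assms(4) by auto
  then have "card (N u \<inter> N v) \<noteq> 2"
    using card_neq_2_if_three[OF common] nb(5) assms(3) by simp
  then show ?thesis by (simp add: absence_witness_def)
qed

lemma card_common_neq_2_if_later_visit:
  assumes "distinct (ys @ [(u, w)])" "set (ys @ [(u, w)]) \<subseteq> set steps"
    and "visitors ys w = v1 # v2 # vs"
  shows "{v1, v2, u} \<subseteq> N c \<inter> N w" and "card (N c \<inter> N w) \<noteq> 2"
proof -
  have visited: "(v1, w) \<in> set ys" "(v2, w) \<in> set ys" "v1 \<noteq> v2"
    using assms(3) distinct_visitors[of ys w] assms(1) set_visitors[of ys w] by auto
  then have three: "v1 \<in> N c \<inter> N w" "v2 \<in> N c \<inter> N w" "u \<in> N c \<inter> N w"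
    using assms(2) by (auto simp: steps_iff nbhd_sym[where y = w])
  then show "{v1, v2, u} \<subseteq> N c \<inter> N w" by simp
  have "v1 \<noteq> u" "v2 \<noteq> u" using visited assms(1) by auto
  then show "card (N c \<inter> N w) \<noteq> 2"
    using card_neq_2_if_three[OF three] \<open>v1 \<noteq> v2\<close> by simp
qed

lemma list_A_witness:
  assumes "distinct ys" "set ys \<subseteq> set steps" "P \<in> list_A E c ys"
  shows "\<exists>u w. P = primal_pair c u w \<and> u \<in> N c \<and> w \<in> N c \<and> absence_witness E c u w"
  using assms
proof (induction ys arbitrary: P rule: rev_induct)
  case Nil
  then show ?case by (simp add: scan_list_def)
next
  case (snoc y ys)
  obtain u w where y: "y = (u, w)" by fastforce
  have u: "u \<in> N c" "w \<in> N u" "w \<noteq> c"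
    using snoc.prems(2) by (auto simp: y steps_iff)
  have ys: "distinct ys" "set ys \<subseteq> set steps" using snoc.prems(1,2) by auto
  note IH = snoc.IH[OF ys] and P = snoc.prems(3)
  show ?case
  proof (cases "w \<in> N c")
    case True
    then show ?thesis
      using IH P ys u by (auto simp: y scan_list_snoc_primal absence_witness_def nbhd_def)
  next
    case False
    show ?thesis
    proof (cases ys w rule: visitors_cases)
      case 1
      then show ?thesis using IH P ys False by (auto simp: y scan_list_snoc_first)
    next
      case (2 v)
      then have "v \<in> N c" using visitors_in_nbhd[OF ys(2), of v w] by simp
      then show ?thesis
        using IH P ys u False 2 absence_witness_second_visit[of ys w v u]
        by (auto simp: y scan_list_snoc_second split: if_splits)
    next
      case (3 v1 v2 vs)
      then have "{v1, v2, u} \<subseteq> N c \<inter> N w" "card (N c \<inter> N w) \<noteq> 2"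
        using card_common_neq_2_if_later_visit snoc.prems(1,2) by (simp_all add: y)
      then have "absence_witness E c p q" if "p \<in> N w" "q \<in> N w" for p q
        using that False u(3) unfolding absence_witness_def by blast
      then show ?thesis
        using IH P ys False 3 \<open>{v1, v2, u} \<subseteq> N c \<inter> N w\<close>
        by (auto simp: y scan_list_snoc_later)
    qed
  qed
qed

lemma beta_in_dv:
  assumes "(e, f) \<in> beta"
  shows "(e, f) \<in> (dv E c)\<^sup>*"
proof -
  obtain u w where uw: "u \<in> N c" "w \<in> N c" "e = {c, u}" "f = {c, w}"
    using assms by (auto simp: beta_c_def elim!: inc_edgesE)
  then have "primal_pair c u w \<in> list_A E c steps" using assms beta_iff by simp
  then obtain a b where ab: "primal_pair c u w = primal_pair c a b" "a \<in> N c" "b \<in> N c"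
    and witness: "absence_witness E c a b"
    using list_A_witness[OF distinct_steps order_refl] by meson
  have "{u, w} = {a, b}" using ab uw primal_pair_eq_iff_nbhd by simp
  then have "absence_witness E c u w"
    using witness absence_witness_commute[of E c a b] by (auto simp: doubleton_eq_iff)
  then have "\<exists>x. x \<notin> N c \<and> x \<noteq> c \<and> u \<in> N x \<and> w \<in> N x \<and> card (N c \<inter> N x) \<noteq> 2"
    if "unique_chordless_square E c u w"
    using that unfolding absence_witness_def by (auto elim: unique_chordless_square_topE)
  then show ?thesis using dv_rtrancl_primalI uw by simp
qed

lemma beta_rtrancl_sym: "(e, f) \<in> beta\<^sup>* \<Longrightarrow> (f, e) \<in> beta\<^sup>*"
  by (rule symD[OF sym_rtrancl[OF sym_beta_c]])

lemma beta_chain_if_other_common_neighbour: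
  assumes "u \<in> N c" "w \<in> N c" "u \<noteq> w" "x \<notin> N c"
    and "take 2 (visitors steps x) = [a, b]" "{a, b} = {u, w}"
    and "y \<in> N u \<inter> N w" "y \<noteq> c" "y \<noteq> x"
  shows "({c, u}, {c, w}) \<in> beta\<^sup>*"
proof (cases "y \<in> N c")
  case True
  then have "({c, u}, {c, y}) \<in> beta" "({c, y}, {c, w}) \<in> beta"
    using beta_if_adjacent assms(1,2,7) nbhd_sym[of w E y] by auto
  then show ?thesis by simp
next
  case False
  have common: "u \<in> N c \<inter> N y" "w \<in> N c \<inter> N y"
    using assms(1,2,7) by (auto simp: nbhd_sym[where y = y])
  show ?thesis
  proof (cases "card (N c \<inter> N y) = 2")
    case True
    then obtain a' b' where "take 2 (visitors steps y) = [a', b']" "{a', b'} = {u, w}"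
      using first_two_visitorsE[OF assms(8) common assms(3)] by blast
    then have "primal_pair c a b \<in> list_A E c steps"
      using list_A_if_shared_first_two[of x y] assms(4-6,9) False by metis
    moreover have "primal_pair c a b = primal_pair c u w"
      using assms(6) by (auto simp: doubleton_eq_iff insert_commute)
    ultimately show ?thesis using beta_iff assms(1,2) by auto
  next
    case False
    then show ?thesis
      using beta_chain_if_many_common[OF \<open>y \<notin> N c\<close> assms(8) common assms(3)] by blast
  qed
qed

lemma beta_chain_if_incidence_without_unique_square:
  assumes "u \<in> N c" "w \<in> N c" "u \<noteq> w" "{u, w} \<notin> E"
    and "\<not> unique_chordless_square E c u w" "primal_pair c u w \<in> list_I E c steps"
  shows "({c, u}, {c, w}) \<in> beta\<^sup>*"
proof -
  obtain x a b where x: "x \<notin> N c" "take 2 (visitors steps x) = [a, b]"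
    and ab: "primal_pair c u w = primal_pair c a b"
    using assms(6) list_I_iff by meson
  have "set [a, b] \<subseteq> set (visitors steps x)" using x(2) by (metis set_take_subset)
  then have nb: "a \<in> N c" "b \<in> N c" "x \<in> N a" "x \<in> N b" "x \<noteq> c"
    using visitors_in_nbhd[OF order_refl] by auto
  then have uw: "{a, b} = {u, w}" using ab assms(1,2) primal_pair_eq_iff_nbhd by simp
  then have common: "c \<in> N u \<inter> N w" "x \<in> N u \<inter> N w"
    using nb assms(1,2) by (auto simp: nbhd_sym doubleton_eq_iff)
  have "card (N u \<inter> N w) \<noteq> 2"
    using assms(4,5) x(1) nb(5) common(2) by (auto simp: unique_chordless_square_def nbhd_def)
  have "\<exists>y \<in> N u \<inter> N w. y \<noteq> c \<and> y \<noteq> x"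
  proof (rule ccontr)
    assume "\<not> ?thesis"
    then have "N u \<inter> N w = {c, x}" using common by auto
    then show False using \<open>card (N u \<inter> N w) \<noteq> 2\<close> nb(5) by simp
  qed
  then show ?thesis
    using beta_chain_if_other_common_neighbour[OF assms(1-3) x uw] by blast
qed

lemma scan_rel_if_delta_primal:
  assumes "u \<in> N c" "w \<in> N c" "({c, u}, {c, w}) \<in> delta E"
  shows "({c, u}, {c, w}) \<in> (alpha \<union> beta)\<^sup>*"
proof (cases "u = w")
  case False
  have not_unique: "\<not> unique_chordless_square E c u w"
    using delta_primal_iff[OF assms(1,2) False] assms(3) by blast
  consider "{u, w} \<in> E" | "primal_pair c u w \<notin> list_I E c steps"
    | "{u, w} \<notin> E" "primal_pair c u w \<in> list_I E c steps"
    by blast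
  then show ?thesis
  proof cases
    case 1
    then show ?thesis using beta_if_adjacent assms(1,2) by (auto simp: nbhd_def)
  next
    case 2
    then show ?thesis using alpha_iff assms(1,2) by blast
  next
    case 3
    then have "({c, u}, {c, w}) \<in> beta\<^sup>*"
      using beta_chain_if_incidence_without_unique_square assms(1,2) False not_unique by blast
    then show ?thesis using rtrancl_mono[of beta "alpha \<union> beta"] by blast
  qed
qed simp

lemma delta_from_primal_cases:
  assumes "u \<in> N c" "c \<notin> g" "({c, u}, g) \<in> delta E"
  obtains (adjacent) x where "g = {u, x}" "x \<noteq> c" "\<not> unique_chordless_square E u c x"
  | (opposite) p q where "g = {p, q}" "q \<in> N c" "p \<in> N u" "p \<in> N q" "p \<notin> N c" "p \<noteq> c"
      "{u, q} \<notin> E" "q \<noteq> u"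
proof -
  from assms(3) consider
    (adj) v u' w' where "{c, u} = {v, u'}" "g = {v, w'}" "\<not> unique_chordless_square E v u' w'"
  | (square) a b c' d where "chordless_square E a b c' d" "{c, u} = {a, b}" "g = {c', d}"
  | (same) "{c, u} = g"
    unfolding delta_def by blast
  then show thesis
  proof cases
    case adj
    with assms(2) have "v = u" "u' = c" "w' \<noteq> c" by (auto simp: doubleton_eq_iff)
    then show thesis using adj adjacent by blast
  next
    case square
    then consider "a = c" "b = u" | "a = u" "b = c" by (auto simp: doubleton_eq_iff)
    then show thesis
    proof cases
      case 1
      then have "chordless_square E c u c' d" using square by simp
      then show thesis
        by (intro opposite[of c' d])
          (use square(3) in \<open>auto simp: chordless_square_def nbhd_def insert_commute\<close>)
    next
      case 2
      then have "chordless_square E u c c' d" using square by simp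
      then show thesis
        by (intro opposite[of d c'])
          (use square(3) in \<open>auto simp: chordless_square_def nbhd_def insert_commute\<close>)
    qed
  next
    case same
    then show thesis using assms(2) by auto
  qed
qed

lemma beta_chain_if_adjacent_and_opposite:
  assumes "u \<in> N c" "w \<in> N c" "u \<noteq> w" "x \<noteq> c" "\<not> unique_chordless_square E u c x"
    and "{u, x} \<in> E" "{u, x} = {p, q}" "q \<in> N c" "p \<in> N w" "p \<notin> N c" "{w, q} \<notin> E"
  shows "({c, u}, {c, w}) \<in> beta\<^sup>*"
proof -
  have "u \<noteq> p" using assms(1,10) by blast
  then have "q = u" "p = x" using assms(7) by (auto simp: doubleton_eq_iff)
  then have common: "u \<in> N c \<inter> N x" "w \<in> N c \<inter> N x" and "{c, x} \<notin> E" "{u, w} \<notin> E"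
    using assms(1,2,6,9,10,11) by (auto simp: nbhd_def insert_commute)
  have "card (N c \<inter> N x) \<noteq> 2"
  proof
    assume "card (N c \<inter> N x) = 2"
    then have "unique_chordless_square E u c x"
      unfolding unique_chordless_square_def
      using common \<open>{c, x} \<notin> E\<close> \<open>{u, w} \<notin> E\<close> assms(3) by (intro conjI exI[of _ w]) auto
    with assms(5) show False ..
  qed
  then show ?thesis
    using beta_chain_if_many_common common assms(3,4,10) \<open>p = x\<close> by blast
qed

lemma beta_chain_if_delta_through_nonprimal:
  assumes "u \<in> N c" "w \<in> N c" "g \<in> E" "c \<notin> g"
    and "({c, u}, g) \<in> delta E" "(g, {c, w}) \<in> delta E"
  shows "({c, u}, {c, w}) \<in> beta\<^sup>*"
proof (cases "u = w")
  case False
  have to_w: "({c, w}, g) \<in> delta E" using assms(6) by (rule delta_sym)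
  show ?thesis
  using assms(1,4,5) proof (cases rule: delta_from_primal_cases)
    case (adjacent x)
    note at_u = this
    show ?thesis
      using assms(2,4) to_w proof (cases rule: delta_from_primal_cases)
      case (adjacent y)
      then have "{u, w} \<in> E" using at_u(1) assms(3) False by (auto simp: doubleton_eq_iff)
      then show ?thesis using beta_if_adjacent assms(1,2) by (auto simp: nbhd_def)
    next
      case (opposite p q)
      then have "{u, x} = {p, q}" "{u, x} \<in> E" using at_u(1) assms(3) by simp_all
      then show ?thesis
        using beta_chain_if_adjacent_and_opposite[OF assms(1,2) False at_u(2,3)] opposite
        by blast
    qed
  next
    case (opposite p q)
    note at_u = this
    show ?thesis
      using assms(2,4) to_w proof (cases rule: delta_from_primal_cases)
      case (adjacent y)
      then have "{w, y} = {p, q}" "{w, y} \<in> E" using at_u(1) assms(3) by simp_all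
      then have "({c, w}, {c, u}) \<in> beta\<^sup>*"
        using beta_chain_if_adjacent_and_opposite[OF assms(2,1)] adjacent at_u False by blast
      then show ?thesis by (rule beta_rtrancl_sym)
    next
      case (opposite p' q')
      then have "p' = p" "q' = q"
        using at_u(1,2,5) by (auto simp: doubleton_eq_iff)
      then have common: "u \<in> N c \<inter> N p" "w \<in> N c \<inter> N p" "q \<in> N c \<inter> N p"
        using assms(1,2) opposite(3) at_u(2-4) by (auto simp: nbhd_sym[where y = p])
      then have "card (N c \<inter> N p) \<noteq> 2"
        using card_neq_2_if_three False at_u(8) opposite(8) \<open>q' = q\<close> by metis
      then show ?thesis
        using beta_chain_if_many_common[OF at_u(5,6) common(1,2) False] by blast
    qed
  qed
qed simp

text \<open>A step of d_c from a primal edge ends in a primal edge or in an edge missing c, and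
  the next step from such an edge must return to a primal edge.\<close>
lemma dv_rtrancl_from_primal:
  assumes "e \<in> inc_edges E c" "(e, f) \<in> (dv E c)\<^sup>*"
  shows "(f \<in> inc_edges E c \<and> (e, f) \<in> (alpha \<union> beta)\<^sup>*) \<or>
    (c \<notin> f \<and> (\<exists>h \<in> inc_edges E c. (e, h) \<in> (alpha \<union> beta)\<^sup>* \<and> (h, f) \<in> delta E))"
  using assms(2)
proof (induction rule: rtrancl_induct)
  case base
  then show ?case using assms(1) by simp
next
  case (step g g')
  have step_delta: "(g, g') \<in> delta E" "g \<in> inc_edges E c \<or> g' \<in> inc_edges E c" "g' \<in> E"
    using step.hyps(2) by (auto simp: dv_def inc_edges_def)
  have beta_sub: "beta\<^sup>* \<subseteq> (alpha \<union> beta)\<^sup>*" by (rule rtrancl_mono) simp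
  from step.IH show ?case
  proof (elim disjE conjE bexE)
    assume g: "g \<in> inc_edges E c" and reach: "(e, g) \<in> (alpha \<union> beta)\<^sup>*"
    show ?case
    proof (cases "g' \<in> inc_edges E c")
      case True
      obtain u w where "u \<in> N c" "g = {c, u}" "w \<in> N c" "g' = {c, w}"
        using g True by (auto elim!: inc_edgesE)
      then have "(g, g') \<in> (alpha \<union> beta)\<^sup>*"
        using scan_rel_if_delta_primal step_delta(1) by simp
      then show ?thesis using reach True by (meson rtrancl_trans)
    next
      case False
      then show ?thesis using g reach step_delta by (auto simp: inc_edges_def)
    qed
  next
    fix h assume g: "c \<notin> g" and h: "h \<in> inc_edges E c" "(e, h) \<in> (alpha \<union> beta)\<^sup>*" "(h, g) \<in> delta E"
    have g': "g' \<in> inc_edges E c" using g step_delta(2) by (auto simp: inc_edges_def)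
    obtain u w where "u \<in> N c" "h = {c, u}" "w \<in> N c" "g' = {c, w}"
      using h(1) g' by (auto elim!: inc_edgesE)
    moreover have "g \<in> E" using h(3) by (simp add: delta_def)
    ultimately have "(h, g') \<in> beta\<^sup>*"
      using beta_chain_if_delta_through_nonprimal g h(3) step_delta(1) by simp
    then show ?case using g' h(2) beta_sub by (meson rtrancl_trans subsetD)
  qed
qed

lemma scan_rel_trancl_iff_dv_trancl:
  assumes "e \<in> inc_edges E c" "f \<in> inc_edges E c" "e \<noteq> f"
  shows "(e, f) \<in> (alpha \<union> beta)\<^sup>+ \<longleftrightarrow> (e, f) \<in> (dv E c)\<^sup>+"
proof
  have "alpha \<union> beta \<subseteq> (dv E c)\<^sup>*" using alpha_in_dv beta_in_dv by auto
  then have "(alpha \<union> beta)\<^sup>* \<subseteq> (dv E c)\<^sup>*" by (metis rtrancl_mono rtrancl_idemp)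
  moreover assume "(e, f) \<in> (alpha \<union> beta)\<^sup>+"
  ultimately have "(e, f) \<in> (dv E c)\<^sup>*" by auto
  then show "(e, f) \<in> (dv E c)\<^sup>+" using assms(3) by (simp add: rtrancl_eq_or_trancl)
next
  assume "(e, f) \<in> (dv E c)\<^sup>+"
  then have "(e, f) \<in> (dv E c)\<^sup>*" by simp
  then have "(e, f) \<in> (alpha \<union> beta)\<^sup>*"
    using dv_rtrancl_from_primal[OF assms(1)] assms(2) by (auto simp: inc_edges_def)
  then show "(e, f) \<in> (alpha \<union> beta)\<^sup>+" using assms(3) by (simp add: rtrancl_eq_or_trancl)
qed

end

theorem mainTheorem6:
  fixes V :: "'a set" and E :: "'a set set" and c :: 'a
    and ord :: "'a list" and nb :: "'a \<Rightarrow> 'a list" and e f :: "'a set"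
  assumes "simple_graph V E" and "connected_graph V E" and "c \<in> V"
    and "valid_scan_order E c ord nb"
    and "e \<in> inc_edges E c" and "f \<in> inc_edges E c" and "e \<noteq> f"
  shows "(e, f) \<in> (alpha_bar_c E c ord nb \<union> beta_c E c ord nb)\<^sup>+ \<longleftrightarrow> (e, f) \<in> (dv E c)\<^sup>+"
proof -
  interpret scan_at V E c ord nb
    using assms(1,4) by unfold_locales
  show ?thesis using scan_rel_trancl_iff_dv_trancl assms(5-7) .
qed

end
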